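(* Let $n,m$ be positive integers. For $\lambda\in\mathcal{P}^m_n$ let $\bar\varphi_n(\lambda)=\{k_{i,j}(\lambda):1\le i\le j\le n\}$, where $$k_{i,j}(\lambda)=\min\left\{m,\left\lceil\frac{\lambda_i-\sum_{\ell=j+1}^n k_{i,\ell}(\lambda)+\sum_{\ell=i+1}^j k_{\ell,j}(\lambda)}{j-i+1}\right\rceil\right\}$$ (defined recursively in order of decreasing $i$, and for fixed $i$ decreasing $j$). Then the image $\bar\varphi_n(\mathcal{P}^m_n)$ is exactly the set of Shi tableaux $\{k_{i,j}(R)\}$ of the dominant regions $R\in\mathcal{R}^m_n$.
   Context: $\mathcal{P}^m_n$ is the set of integer partitions $(\lambda_1\ge\cdots\ge\lambda_n\ge0)$ with $\lambda_i\le m(n-i+1)$. Type $A_n$: $V=\{x\in\mathbb{R}^{n+1}:\sum x_i=0\}$, positive roots $\alpha_{ij}=\varepsilon_i-\varepsilon_{j+1}$ ($1\le i\le j\le n$), $H_{\alpha,k}=\{v:\langle v,\alpha\rangle=k\}$; $\mathrm{Cat}^m(A_n)$ consists of the $H_{\alpha,k}$ with $\alpha$ positive, $0\le k\le m$; $\mathcal{R}^m_n$ is its set of dominant regions (regions contained in $\{v:\langle v,\alpha\rangle\ge0\ \forall\alpha>0\}$). The Shi tableau of $R\in\mathcal{R}^m_n$ is the family $k_{i,j}(R)\in\{0,\dots,m\}$, $1\le i\le j\le n$, where $k_{i,j}(R)$ is the unique $k$ with $k\le\langle\alpha_{ij},x\rangle\le k+1$ for all $x\in R$ if $k<m$, and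 $\langle\alpha_{ij},x\rangle\ge m$ for all $x\in R$ if $k=m$. Both tableaux are arranged in the staircase diagram of shape $(n,\dots,1)$ with entry $k_{i,j}$ in row $i$, column $n-j+1$. *)

theory Defs
  imports "HOL-Analysis.Analysis"
begin

definition partitions :: "nat \<Rightarrow> nat \<Rightarrow> (nat \<Rightarrow> int) set" where
  "partitions m n = {lam. (\<forall>i. i \<notin> {1..n} \<longrightarrow> lam i = 0)
      \<and> (\<forall>i\<in>{1..n}. 0 \<le> lam i \<and> lam i \<le> int (m * (n - i + 1)))
      \<and> (\<forall>i\<in>{1..<n}. lam (i+1) \<le> lam i)}"

function phik :: "nat \<Rightarrow> nat \<Rightarrow> (nat \<Rightarrow> int) \<Rightarrow> nat \<Rightarrow> nat \<Rightarrow> int" where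
  "phik m n lam i j =
     (if 1 \<le> i \<and> i \<le> j \<and> j \<le> n then
        min (int m) \<lceil>real_of_int (lam i - (\<Sum>l\<in>{j+1..n}. phik m n lam i l)
                                    + (\<Sum>l\<in>{i+1..j}. phik m n lam l j))
                     / real (j - i + 1)\<rceil>
      else 0)"
  by pat_completeness auto
termination
  by (relation "measures [\<lambda>(m,n,lam,i,j). n + 1 - i, \<lambda>(m,n,lam,i,j). n + 1 - j]") auto

definition phi_bar :: "nat \<Rightarrow> nat \<Rightarrow> (nat \<Rightarrow> int) \<Rightarrow> nat \<Rightarrow> nat \<Rightarrow> int" where
  "phi_bar m n lam = (\<lambda>i j. phik m n lam i j)"

text \<open>Type A_n: V = {x in R^(n+1) : sum x_i = 0}, points as functions on indices 1..n+1.\<close>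
definition VA :: "nat \<Rightarrow> (nat \<Rightarrow> real) set" where
  "VA n = {x. (\<forall>i. i \<notin> {1..n+1} \<longrightarrow> x i = 0) \<and> (\<Sum>i\<in>{1..n+1}. x i) = 0}"

text \<open>pairing with alpha_{ij} = e_i - e_{j+1}\<close>
definition pair_alpha :: "(nat \<Rightarrow> real) \<Rightarrow> nat \<Rightarrow> nat \<Rightarrow> real" where
  "pair_alpha x i j = x i - x (j + 1)"

definition hyperplane_A :: "nat \<Rightarrow> nat \<Rightarrow> nat \<Rightarrow> int \<Rightarrow> (nat \<Rightarrow> real) set" where
  "hyperplane_A n i j k = {v \<in> VA n. pair_alpha v i j = real_of_int k}"

definition cat_arr :: "nat \<Rightarrow> nat \<Rightarrow> (nat \<Rightarrow> real) set set" where
  "cat_arr m n = {hyperplane_A n i j k | i j k. 1 \<le> i \<and> i \<le> j \<and> j \<le> n \<and> 0 \<le> k \<and> k \<le> int m}"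

definition complement_arr :: "nat \<Rightarrow> nat \<Rightarrow> (nat \<Rightarrow> real) set" where
  "complement_arr m n = VA n - \<Union>(cat_arr m n)"

definition regions :: "nat \<Rightarrow> nat \<Rightarrow> (nat \<Rightarrow> real) set set" where
  "regions m n = {connected_component_set (complement_arr m n) x | x. x \<in> complement_arr m n}"

definition dominant_cone :: "nat \<Rightarrow> (nat \<Rightarrow> real) set" where
  "dominant_cone n = {v. \<forall>i j. 1 \<le> i \<and> i \<le> j \<and> j \<le> n \<longrightarrow> pair_alpha v i j \<ge> 0}"

definition dominant_regions :: "nat \<Rightarrow> nat \<Rightarrow> (nat \<Rightarrow> real) set set" where
  "dominant_regions m n = {R \<in> regions m n. R \<subseteq> dominant_cone n}"

definition shi_k :: "nat \<Rightarrow> (nat \<Rightarrow> real) set \<Rightarrow> nat \<Rightarrow> nat \<Rightarrow> int" where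
  "shi_k m R i j = (THE k. 0 \<le> k \<and> k \<le> int m \<and>
      (if k < int m then (\<forall>x\<in>R. real_of_int k \<le> pair_alpha x i j \<and> pair_alpha x i j \<le> real_of_int k + 1)
       else (\<forall>x\<in>R. pair_alpha x i j \<ge> real m)))"

definition shi_tableau :: "nat \<Rightarrow> nat \<Rightarrow> (nat \<Rightarrow> real) set \<Rightarrow> nat \<Rightarrow> nat \<Rightarrow> int" where
  "shi_tableau m n R = (\<lambda>i j. if 1 \<le> i \<and> i \<le> j \<and> j \<le> n then shi_k m R i j else 0)"

end

theory Submission
  imports Defs
begin

text \<open>A point \<open>x\<close> of the dominant cone off the walls determines the tableau
  \<open>k\<^sub>i\<^sub>j(x) = min m \<lfloor>\<langle>\<alpha>\<^sub>i\<^sub>j, x\<rangle>\<rfloor>\<close>. It only depends on how many walls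
  \<open>\<langle>\<alpha>\<^sub>i\<^sub>j, -\<rangle> = c\<close> lie below \<open>x\<close>, so it is constant on the region of \<open>x\<close> and equals its
  Shi tableau; its row sums \<open>\<lambda>\<^sub>i = \<Sum>\<^sub>j k\<^sub>i\<^sub>j(x)\<close> form a partition in \<open>\<P>\<^sup>m\<^sub>n\<close>. Since
  \<open>\<alpha>\<^sub>i\<^sub>j = \<alpha>\<^sub>i\<^sub>l + \<alpha>\<^sub>l\<^sub>+\<^sub>1\<^sub>,\<^sub>j\<close> and the floor is additive up to one, the recursion
  defining \<open>\<phi>\<close> recovers the tableau from \<open>\<lambda>\<close>. Conversely every partition arises this way:
  choose generic coordinates \<open>x\<^sub>n\<^sub>+\<^sub>1, x\<^sub>n, \<dots>, x\<^sub>1\<close> one at a time; as \<open>x\<^sub>i\<close> grows the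
  \<open>i\<close>-th row sum increases in steps of one from \<open>\<lambda>\<^sub>i\<^sub>+\<^sub>1\<close> to \<open>m (n - i + 1)\<close>.\<close>

declare phik.simps[simp del]

definition capped_floor :: "nat \<Rightarrow> real \<Rightarrow> int" where
  "capped_floor m u = min (int m) \<lfloor>u\<rfloor>"

lemma capped_floor_le: "capped_floor m u \<le> int m"
  by (simp add: capped_floor_def)

lemma capped_floor_nonneg: "0 \<le> u \<Longrightarrow> 0 \<le> capped_floor m u"
  by (simp add: capped_floor_def)

lemma capped_floor_below_cap:
  assumes "capped_floor m u < int m"
  shows "real_of_int (capped_floor m u) \<le> u \<and> u < real_of_int (capped_floor m u) + 1"
proof -
  have "capped_floor m u = \<lfloor>u\<rfloor>"
    using assms by (simp add: capped_floor_def)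
  then show ?thesis
    using of_int_floor_le[of u] real_of_int_floor_add_one_gt[of u] by simp
qed

lemma capped_floor_at_cap:
  assumes "capped_floor m u = int m"
  shows "real m \<le> u"
proof -
  have "int m \<le> \<lfloor>u\<rfloor>"
    using assms by (simp add: capped_floor_def)
  then show ?thesis
    by (simp add: le_floor_iff)
qed

lemma capped_floor_eqI:
  assumes "k < int m" "real_of_int k \<le> u" "u < real_of_int k + 1"
  shows "capped_floor m u = k"
proof -
  have "\<lfloor>u\<rfloor> = k"
    using assms by (intro floor_unique) auto
  then show ?thesis
    using assms(1) by (simp add: capped_floor_def)
qed

lemma capped_floor_eq_cap: "real m \<le> u \<Longrightarrow> capped_floor m u = int m"
  by (simp add: capped_floor_def le_floor_iff)

lemma capped_floor_add_ge:
  assumes "0 \<le> a" "0 \<le> b"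
  shows "capped_floor m (a + b) - 1 \<le> capped_floor m a + capped_floor m b"
proof -
  have "a + b < of_int (\<lfloor>a\<rfloor> + \<lfloor>b\<rfloor> + 2)"
    using real_of_int_floor_add_one_gt[of a] real_of_int_floor_add_one_gt[of b] by linarith
  then have "\<lfloor>a + b\<rfloor> < \<lfloor>a\<rfloor> + \<lfloor>b\<rfloor> + 2"
    by (simp add: floor_less_iff)
  moreover have "0 \<le> \<lfloor>a\<rfloor>" "0 \<le> \<lfloor>b\<rfloor>"
    using assms by simp_all
  ultimately show ?thesis
    unfolding capped_floor_def by linarith
qed

lemma capped_floor_add_le:
  assumes "0 \<le> a" "0 \<le> b" "capped_floor m (a + b) < int m"
  shows "capped_floor m a + capped_floor m b \<le> capped_floor m (a + b)"
  using le_floor_add[of a b] assms by (simp add: capped_floor_def)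

lemma capped_floor_eq_card:
  assumes "0 \<le> u"
  shows "capped_floor m u = int (card {c\<in>{1..m}. real c \<le> u})"
proof -
  have "{c\<in>{1..m}. real c \<le> u} = {1..min m (nat \<lfloor>u\<rfloor>)}"
    using assms by (auto simp: le_floor_iff le_nat_iff)
  then show ?thesis
    using assms by (simp add: capped_floor_def of_nat_min)
qed

lemma min_ceiling_average:
  fixes a :: "'a \<Rightarrow> int"
  assumes "finite L" "K \<le> int m"
    and lower: "\<And>l. l \<in> L \<Longrightarrow> K - 1 \<le> a l"
    and upper: "\<And>l. K < int m \<Longrightarrow> l \<in> L \<Longrightarrow> a l \<le> K"
  shows "min (int m) \<lceil>real_of_int (K + (\<Sum>l\<in>L. a l)) / real (card L + 1)\<rceil> = K"
proof -
  define d where "d = card L + 1"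
  define N where "N = K + (\<Sum>l\<in>L. a l)"
  have "d * (K - 1) < N"
  proof -
    have "int (card L) * (K - 1) \<le> (\<Sum>l\<in>L. a l)"
      using sum_mono[of L "\<lambda>_. K - 1" a] lower by simp
    then show ?thesis by (simp add: d_def N_def algebra_simps)
  qed
  then have "real_of_int (int d * (K - 1)) < real_of_int N"
    by (simp only: of_int_less_iff)
  then have "real d * (real_of_int K - 1) < real_of_int N"
    by simp
  then have gt: "real_of_int K - 1 < real_of_int N / real d"
    by (simp add: d_def field_simps)
  show ?thesis
  proof (cases "K < int m")
    case True
    have "(\<Sum>l\<in>L. a l) \<le> int (card L) * K"
      using sum_mono[of L a "\<lambda>_. K"] upper[OF True] by simp
    then have "N \<le> d * K" by (simp add: d_def N_def algebra_simps)
    then have "real_of_int N \<le> real_of_int (int d * K)"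
      by (simp only: of_int_le_iff)
    then have "real_of_int N \<le> real d * real_of_int K"
      by simp
    then have "real_of_int N / real d \<le> real_of_int K"
      by (simp add: d_def field_simps)
    then have "\<lceil>real_of_int N / real d\<rceil> = K"
      using gt by (intro ceiling_unique) auto
    then show ?thesis using True by (simp add: d_def N_def)
  next
    case False
    moreover have "K \<le> \<lceil>real_of_int N / real d\<rceil>"
      using gt by (simp add: le_ceiling_iff)
    ultimately show ?thesis using assms(2) by (simp add: d_def N_def)
  qed
qed

definition point_tableau :: "nat \<Rightarrow> nat \<Rightarrow> (nat \<Rightarrow> real) \<Rightarrow> nat \<Rightarrow> nat \<Rightarrow> int" where
  "point_tableau m n x i j =
     (if 1 \<le> i \<and> i \<le> j \<and> j \<le> n then capped_floor m (pair_alpha x i j) else 0)"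

definition point_partition :: "nat \<Rightarrow> nat \<Rightarrow> (nat \<Rightarrow> real) \<Rightarrow> nat \<Rightarrow> int" where
  "point_partition m n x i = (if i \<in> {1..n} then \<Sum>j=i..n. point_tableau m n x i j else 0)"

lemma pair_alpha_split: "pair_alpha x i j = pair_alpha x i l + pair_alpha x (l + 1) j"
  by (simp add: pair_alpha_def)

lemma point_partition_residual:
  assumes "1 \<le> i" "i \<le> j" "j \<le> n"
  shows "point_partition m n x i - (\<Sum>l\<in>{j+1..n}. point_tableau m n x i l)
           + (\<Sum>l\<in>{i+1..j}. point_tableau m n x l j)
         = point_tableau m n x i j
           + (\<Sum>l\<in>{i..<j}. point_tableau m n x i l + point_tableau m n x (l + 1) j)"
proof -
  have "{i..n} = insert j ({i..<j} \<union> {j+1..n})" "{i..<j} \<inter> {j+1..n} = {}"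
    using assms by auto
  then have "point_partition m n x i = point_tableau m n x i j
      + (\<Sum>l\<in>{i..<j}. point_tableau m n x i l) + (\<Sum>l\<in>{j+1..n}. point_tableau m n x i l)"
    using assms by (simp add: point_partition_def sum.union_disjoint)
  moreover have "(\<Sum>l\<in>{i+1..j}. point_tableau m n x l j) = (\<Sum>l\<in>{i..<j}. point_tableau m n x (l + 1) j)"
    using sum.shift_bounds_Suc_ivl[of "\<lambda>l. point_tableau m n x l j" i j] assms
    by (simp add: atLeastLessThanSuc_atLeastAtMost)
  ultimately show ?thesis
    by (simp add: sum.distrib)
qed

text \<open>By subadditivity of the capped floor along \<open>\<alpha>\<^sub>i\<^sub>j = \<alpha>\<^sub>i\<^sub>l + \<alpha>\<^sub>l\<^sub>+\<^sub>1\<^sub>,\<^sub>j\<close>, the numerator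
  of the recursion is \<open>k\<^sub>i\<^sub>j\<close> plus \<open>j - i\<close> pair sums lying in \<open>[k\<^sub>i\<^sub>j - 1, k\<^sub>i\<^sub>j]\<close>.\<close>
lemma phik_point_partition:
  assumes "x \<in> dominant_cone n"
  shows "phik m n (point_partition m n x) i j = point_tableau m n x i j"
  using assms
proof (induction m n "point_partition m n x" i j rule: phik.induct)
  case (1 m n i j)
  show ?case
  proof (cases "1 \<le> i \<and> i \<le> j \<and> j \<le> n")
    case False
    then show ?thesis
      by (subst phik.simps) (simp only: if_False point_tableau_def)
  next
    case True
    then have ij: "1 \<le> i" "i \<le> j" "j \<le> n" by auto
    let ?T = "point_tableau m n x"
    have "0 \<le> pair_alpha x i' j'" if "1 \<le> i'" "i' \<le> j'" "j' \<le> n" for i' j'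
      using "1.prems" that by (auto simp: dominant_cone_def)
    then have pair_bounds: "?T i j - 1 \<le> ?T i l + ?T (l + 1) j \<and>
        (?T i j < int m \<longrightarrow> ?T i l + ?T (l + 1) j \<le> ?T i j)" if "l \<in> {i..<j}" for l
      using that ij capped_floor_add_ge capped_floor_add_le pair_alpha_split[of x i j l]
      by (simp add: point_tableau_def)
    have "phik m n (point_partition m n x) i j
        = min (int m) \<lceil>real_of_int (point_partition m n x i - (\<Sum>l\<in>{j+1..n}. ?T i l)
                                     + (\<Sum>l\<in>{i+1..j}. ?T l j)) / real (j - i + 1)\<rceil>"
      using "1" True by (subst phik.simps) simp
    also have "\<dots> = min (int m) \<lceil>real_of_int (?T i j + (\<Sum>l\<in>{i..<j}. ?T i l + ?T (l + 1) j))
                                     / real (card {i..<j} + 1)\<rceil>"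
      by (subst point_partition_residual[OF ij]) (simp only: card_atLeastLessThan Suc_diff_le[OF ij(2)])
    also have "\<dots> = ?T i j"
      by (rule min_ceiling_average) (use pair_bounds in \<open>auto simp: point_tableau_def capped_floor_le\<close>)
    finally show ?thesis .
  qed
qed

lemma point_partition_in_partitions:
  assumes "x \<in> dominant_cone n"
  shows "point_partition m n x \<in> partitions m n"
proof -
  let ?T = "point_tableau m n x"
  have alpha_nonneg: "0 \<le> pair_alpha x i j" if "1 \<le> i" "i \<le> j" "j \<le> n" for i j
    using assms that by (auto simp: dominant_cone_def)
  have T_nonneg: "0 \<le> ?T i j" for i j
    using alpha_nonneg by (simp add: point_tableau_def capped_floor_nonneg)
  have T_le: "?T i j \<le> int m" for i j
    by (simp add: point_tableau_def capped_floor_le)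
  have T_antimono: "?T (i + 1) j \<le> ?T i j" if "1 \<le> i" "i + 1 \<le> j" "j \<le> n" for i j
  proof -
    have "pair_alpha x (i + 1) j \<le> pair_alpha x i j"
      using pair_alpha_split[of x i j i] alpha_nonneg[of i i] that by simp
    then show ?thesis
      using that by (simp add: point_tableau_def capped_floor_def floor_mono min.coboundedI2)
  qed
  have "0 \<le> point_partition m n x i \<and> point_partition m n x i \<le> int (m * (n - i + 1))"
    if "i \<in> {1..n}" for i
  proof -
    have "(\<Sum>j=i..n. ?T i j) \<le> (\<Sum>j=i..n. int m)"
      by (intro sum_mono T_le)
    also have "\<dots> = int (card {i..n} * m)"
      by simp
    also have "card {i..n} * m = m * (n - i + 1)"
      using that by (simp add: Suc_diff_le)
    finally show ?thesis
      using that T_nonneg by (simp add: point_partition_def sum_nonneg)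
  qed
  moreover have "point_partition m n x (i + 1) \<le> point_partition m n x i" if "i \<in> {1..<n}" for i
  proof -
    have "(\<Sum>j=i+1..n. ?T (i + 1) j) \<le> (\<Sum>j=i+1..n. ?T i j)"
      using that by (intro sum_mono T_antimono) auto
    also have "\<dots> \<le> (\<Sum>j=i..n. ?T i j)"
      by (intro sum_mono2 T_nonneg) auto
    finally show ?thesis
      using that by (simp add: point_partition_def)
  qed
  ultimately show ?thesis
    by (simp add: partitions_def point_partition_def)
qed

lemma pair_alpha_ne_wall:
  assumes "x \<in> complement_arr m n" "1 \<le> i" "i \<le> j" "j \<le> n" "0 \<le> k" "k \<le> int m"
  shows "pair_alpha x i j \<noteq> real_of_int k"
proof
  assume "pair_alpha x i j = real_of_int k"
  then have "x \<in> hyperplane_A n i j k"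
    using assms(1) by (simp add: hyperplane_A_def complement_arr_def)
  moreover have "hyperplane_A n i j k \<in> cat_arr m n"
    using assms(2-) unfolding cat_arr_def by blast
  ultimately show False
    using assms(1) by (auto simp: complement_arr_def)
qed

lemma component_same_side_of_wall:
  assumes x: "x \<in> complement_arr m n"
    and y: "y \<in> connected_component_set (complement_arr m n) x"
    and "1 \<le> i" "i \<le> j" "j \<le> n" "0 \<le> k" "k \<le> int m"
  shows "pair_alpha y i j < real_of_int k \<longleftrightarrow> pair_alpha x i j < real_of_int k"
proof (rule ccontr)
  assume sides: "\<not> ?thesis"
  let ?C = "connected_component_set (complement_arr m n) x"
  let ?f = "\<lambda>z. pair_alpha z i j"
  have "continuous_on ?C ?f"
    unfolding pair_alpha_def
    by (intro continuous_intros continuous_on_subset[OF continuous_on_product_coordinates]) auto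
  then have "connected (?f ` ?C)"
    by (rule connected_continuous_image) (rule connected_connected_component)
  moreover have "x \<in> ?C"
    using x by (simp add: connected_component_refl)
  ultimately have "real_of_int k \<in> ?f ` ?C"
  proof (cases "?f y < real_of_int k")
    case True
    then show ?thesis
      using connected_contains_Icc[OF \<open>connected (?f ` ?C)\<close>, of "?f y" "?f x"] sides y \<open>x \<in> ?C\<close>
      by auto
  next
    case False
    then show ?thesis
      using connected_contains_Icc[OF \<open>connected (?f ` ?C)\<close>, of "?f x" "?f y"] sides y \<open>x \<in> ?C\<close>
      by auto
  qed
  then obtain z where "real_of_int k = ?f z" and "z \<in> ?C"
    by (rule imageE)
  moreover from \<open>z \<in> ?C\<close> have "z \<in> complement_arr m n"
    using connected_component_subset by blast
  then have "?f z \<noteq> real_of_int k"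
    by (rule pair_alpha_ne_wall[OF _ assms(3-)])
  ultimately show False
    by simp
qed

text \<open>For \<open>u \<ge> 0\<close> the capped floor counts the walls \<open>1, \<dots>, m\<close> below \<open>u\<close>, which cannot change
  within a region.\<close>
lemma component_capped_floor:
  assumes x: "x \<in> complement_arr m n"
    and y: "y \<in> connected_component_set (complement_arr m n) x"
    and ij: "1 \<le> i" "i \<le> j" "j \<le> n" and x_nonneg: "0 \<le> pair_alpha x i j"
  shows "0 \<le> pair_alpha y i j \<and> capped_floor m (pair_alpha y i j) = capped_floor m (pair_alpha x i j)"
proof -
  have side: "pair_alpha y i j < real_of_int k \<longleftrightarrow> pair_alpha x i j < real_of_int k"
    if "0 \<le> k" "k \<le> int m" for k
    using component_same_side_of_wall[OF x y ij that] .
  have y_nonneg: "0 \<le> pair_alpha y i j"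
    using side[of 0] x_nonneg by simp
  have "real c \<le> pair_alpha y i j \<longleftrightarrow> real c \<le> pair_alpha x i j" if "c \<in> {1..m}" for c
    using side[of "int c"] that by (simp add: not_less[symmetric])
  then have "{c\<in>{1..m}. real c \<le> pair_alpha y i j} = {c\<in>{1..m}. real c \<le> pair_alpha x i j}"
    by blast
  then show ?thesis
    using y_nonneg x_nonneg by (simp add: capped_floor_eq_card)
qed

lemma shi_k_component:
  assumes x: "x \<in> complement_arr m n"
    and ij: "1 \<le> i" "i \<le> j" "j \<le> n" and x_nonneg: "0 \<le> pair_alpha x i j"
  shows "shi_k m (connected_component_set (complement_arr m n) x) i j = capped_floor m (pair_alpha x i j)"
  unfolding shi_k_def
proof (rule the_equality)
  let ?R = "connected_component_set (complement_arr m n) x"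
  let ?K = "capped_floor m (pair_alpha x i j)"
  have floor_y: "capped_floor m (pair_alpha y i j) = ?K" "0 \<le> pair_alpha y i j" if "y \<in> ?R" for y
    using component_capped_floor[OF x that ij x_nonneg] by simp_all
  show "0 \<le> ?K \<and> ?K \<le> int m \<and>
      (if ?K < int m then \<forall>y\<in>?R. real_of_int ?K \<le> pair_alpha y i j \<and> pair_alpha y i j \<le> real_of_int ?K + 1
       else \<forall>y\<in>?R. real m \<le> pair_alpha y i j)"
  proof (cases "?K < int m")
    case True
    have "real_of_int ?K \<le> pair_alpha y i j \<and> pair_alpha y i j \<le> real_of_int ?K + 1" if "y \<in> ?R" for y
      using capped_floor_below_cap[of m "pair_alpha y i j"] floor_y(1)[OF that] True by simp
    then show ?thesis
      using True x_nonneg by (simp add: capped_floor_nonneg)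
  next
    case False
    then have "?K = int m"
      using capped_floor_le[of m "pair_alpha x i j"] by linarith
    have "real m \<le> pair_alpha y i j" if "y \<in> ?R" for y
      using capped_floor_at_cap[of m "pair_alpha y i j"] floor_y(1)[OF that] \<open>?K = int m\<close> by simp
    then show ?thesis
      using False x_nonneg by (simp add: capped_floor_nonneg capped_floor_le)
  qed
  fix k
  assume k: "0 \<le> k \<and> k \<le> int m \<and>
      (if k < int m then \<forall>y\<in>?R. real_of_int k \<le> pair_alpha y i j \<and> pair_alpha y i j \<le> real_of_int k + 1
       else \<forall>y\<in>?R. real m \<le> pair_alpha y i j)"
  have "x \<in> ?R"
    using x by (simp add: connected_component_refl)
  show "k = ?K"
  proof (cases "k < int m")
    case True
    then have "real_of_int k \<le> pair_alpha x i j \<and> pair_alpha x i j \<le> real_of_int k + 1"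
      using k \<open>x \<in> ?R\<close> by (simp only: if_True)
    moreover have "pair_alpha x i j \<noteq> real_of_int k + 1"
      using pair_alpha_ne_wall[OF x ij, of "k + 1"] k True by simp
    ultimately show ?thesis
      using capped_floor_eqI[OF True] by fastforce
  next
    case False
    then show ?thesis
      using k \<open>x \<in> ?R\<close> capped_floor_eq_cap by simp
  qed
qed

lemma card_below_next_point:
  fixes Q :: "real set"
  assumes Q: "finite Q" and "\<exists>q\<in>Q. lo < q"
  shows "\<exists>h\<in>Q. lo < h \<and> card {q\<in>Q. q \<le> h} = card {q\<in>Q. q \<le> lo} + 1 \<and>
    (\<forall>t. lo \<le> t \<and> t < h \<longrightarrow> {q\<in>Q. q \<le> t} = {q\<in>Q. q \<le> lo})"
proof -
  define U where "U = {q\<in>Q. lo < q}"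
  have U: "finite U" "U \<noteq> {}"
    using assms by (auto simp: U_def)
  define h where "h = Min U"
  have "h \<in> Q" "lo < h"
    using Min_in[OF U] by (simp_all add: h_def U_def)
  have h_min: "h \<le> q" if "q \<in> Q" "lo < q" for q
    using U(1) that by (simp add: h_def U_def)
  have gap: "q \<le> t \<longleftrightarrow> q \<le> lo" if "q \<in> Q" "lo \<le> t" "t < h" for q t
    using h_min[of q] that by linarith
  have "{q\<in>Q. q \<le> h} = insert h {q\<in>Q. q \<le> lo}"
    using h_min \<open>h \<in> Q\<close> \<open>lo < h\<close> by fastforce
  then have "card {q\<in>Q. q \<le> h} = card {q\<in>Q. q \<le> lo} + 1"
    using Q \<open>lo < h\<close> by simp
  moreover have "{q\<in>Q. q \<le> t} = {q\<in>Q. q \<le> lo}" if "lo \<le> t" "t < h" for t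
    using gap that by blast
  ultimately show ?thesis
    using \<open>h \<in> Q\<close> \<open>lo < h\<close> by blast
qed

text \<open>Take \<open>lo\<close> the largest of \<open>b\<close> and the points of \<open>Q\<close> with at most \<open>s\<close> points below.\<close>
lemma card_below_constant_on_interval:
  fixes Q :: "real set"
  assumes Q: "finite Q" and "card {q\<in>Q. q \<le> b} \<le> s" "s \<le> card Q"
  shows "\<exists>lo hi. b \<le> lo \<and> lo < hi \<and> (\<forall>t\<in>{lo<..<hi}. card {q\<in>Q. q \<le> t} = s)"
proof -
  define G where "G t = card {q\<in>Q. q \<le> t}" for t
  define A where "A = {e \<in> insert b Q. G e \<le> s}"
  define lo where "lo = Max A"
  have A: "finite A" "b \<in> A"
    using assms by (simp_all add: A_def G_def)
  then have "lo \<in> A"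
    unfolding lo_def by (intro Max_in) auto
  then have "G lo \<le> s"
    by (simp add: A_def)
  have lo_max: "e \<le> lo" if "e \<in> A" for e
    unfolding lo_def using A(1) that by (rule Max_ge)
  show ?thesis
  proof (cases "\<exists>q\<in>Q. lo < q")
    case True
    obtain h where "h \<in> Q" "lo < h" "card {q\<in>Q. q \<le> h} = card {q\<in>Q. q \<le> lo} + 1"
      and const: "\<And>t. lo \<le> t \<Longrightarrow> t < h \<Longrightarrow> {q\<in>Q. q \<le> t} = {q\<in>Q. q \<le> lo}"
      using card_below_next_point[OF Q True] by blast
    have "G lo = s"
    proof (rule ccontr)
      assume "G lo \<noteq> s"
      with \<open>G lo \<le> s\<close> \<open>card {q\<in>Q. q \<le> h} = card {q\<in>Q. q \<le> lo} + 1\<close> \<open>h \<in> Q\<close> have "h \<in> A"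
        by (simp add: A_def G_def)
      with lo_max \<open>lo < h\<close> show False
        by (meson not_le)
    qed
    have "G t = s" if "t \<in> {lo<..<h}" for t
      using const[of t] that \<open>G lo = s\<close> unfolding G_def by simp
    then show ?thesis
      using lo_max[OF A(2)] \<open>lo < h\<close> unfolding G_def by blast
  next
    case False
    then have all_below: "{q\<in>Q. q \<le> t} = Q" if "lo \<le> t" for t
      using that by force
    then have "G lo = s"
      using \<open>G lo \<le> s\<close> assms(3) unfolding G_def by simp
    then have "G t = s" if "t \<in> {lo<..<lo + 1}" for t
      using all_below[of t] all_below[of lo] that unfolding G_def by simp
    then show ?thesis
      using lo_max[OF A(2)] unfolding G_def by (meson less_add_one)
  qed
qed

definition generic_on :: "'a set \<Rightarrow> ('a \<Rightarrow> real) \<Rightarrow> bool" where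
  "generic_on J y \<longleftrightarrow> (\<forall>p\<in>J. \<forall>q\<in>J. p \<noteq> q \<longrightarrow> y p - y q \<notin> \<int>)"

lemma generic_on_inj_on_shifts:
  assumes "generic_on J y"
  shows "inj_on (\<lambda>(p, c::nat). y p + real c) (J \<times> C)"
proof (rule inj_onI, clarsimp)
  fix p q :: 'a and c d :: nat
  assume "p \<in> J" "q \<in> J" "y p + real c = y q + real d"
  moreover have "y p - y q = of_int (int d - int c)"
    using calculation(3) by simp
  ultimately show "p = q \<and> c = d"
    using assms unfolding generic_on_def by (metis Ints_of_int add_left_cancel of_nat_eq_iff)
qed

lemma sum_capped_floor_eq_card_below:
  fixes y :: "'a \<Rightarrow> real"
  assumes J: "finite J" and below: "\<And>p. p \<in> J \<Longrightarrow> y p \<le> t" and gen: "generic_on J y"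
  shows "(\<Sum>p\<in>J. capped_floor m (t - y p))
    = int (card {q \<in> (\<lambda>(p, c). y p + real c) ` (J \<times> {1..m}). q \<le> t})"
proof -
  define S where "S = (SIGMA p:J. {c\<in>{1..m}. real c \<le> t - y p})"
  have "(\<Sum>p\<in>J. capped_floor m (t - y p)) = int (\<Sum>p\<in>J. card {c\<in>{1..m}. real c \<le> t - y p})"
    using below by (simp add: capped_floor_eq_card)
  also have "(\<Sum>p\<in>J. card {c\<in>{1..m}. real c \<le> t - y p}) = card S"
    using J by (simp add: S_def)
  also have "\<dots> = card ((\<lambda>(p, c). y p + real c) ` S)"
    by (rule card_image[symmetric], rule inj_on_subset[OF generic_on_inj_on_shifts[OF gen]])
      (auto simp: S_def)
  also have "(\<lambda>(p, c). y p + real c) ` S = {q \<in> (\<lambda>(p, c). y p + real c) ` (J \<times> {1..m}). q \<le> t}"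
    by (force simp: S_def algebra_simps)
  finally show ?thesis .
qed

lemma exists_generic_in_interval:
  fixes y :: "'a \<Rightarrow> real"
  assumes J: "finite J" and "lo < hi"
  shows "\<exists>t\<in>{lo<..<hi}. \<forall>p\<in>J. t - y p \<notin> \<int>"
proof -
  define C where "C = (\<lambda>(p, z). y p + of_int z) ` (J \<times> (UNIV :: int set))"
  have "countable C"
    using J by (simp add: C_def countable_finite)
  then have "\<not> {lo<..<hi} \<subseteq> C"
    using uncountable_open_interval[of lo hi] \<open>lo < hi\<close> countable_subset by blast
  then obtain t where t: "t \<in> {lo<..<hi}" "t \<notin> C"
    by blast
  have "t - y p \<notin> \<int>" if "p \<in> J" for p
  proof
    assume "t - y p \<in> \<int>"
    then obtain z where "t - y p = of_int z"
      by (elim Ints_cases)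
    then have "t \<in> C"
      using that by (force simp: C_def algebra_simps)
    with t show False by simp
  qed
  then show ?thesis
    using t(1) by blast
qed

text \<open>As \<open>t\<close> grows past \<open>b\<close> the sum below counts the points \<open>y p + c\<close>, \<open>c \<in> {1..m}\<close>, up to \<open>t\<close>;
  these are distinct by genericity, so every value up to \<open>m |J|\<close> is attained on an open interval,
  which contains a generic \<open>t\<close>.\<close>
lemma exists_generic_level:
  fixes y :: "'a \<Rightarrow> real"
  assumes J: "finite J" and below: "\<And>p. p \<in> J \<Longrightarrow> y p \<le> b" and gen: "generic_on J y"
    and s: "(\<Sum>p\<in>J. capped_floor m (b - y p)) \<le> s" "s \<le> int m * int (card J)"
  shows "\<exists>t>b. (\<forall>p\<in>J. t - y p \<notin> \<int>) \<and> (\<Sum>p\<in>J. capped_floor m (t - y p)) = s"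
proof -
  define Q where "Q = (\<lambda>(p, c). y p + real c) ` (J \<times> {1..m})"
  have "card Q = card J * m"
    using card_image[OF generic_on_inj_on_shifts[OF gen, of "{1..m}"]] J
    by (simp add: Q_def card_cartesian_product)
  have count: "(\<Sum>p\<in>J. capped_floor m (t - y p)) = int (card {q\<in>Q. q \<le> t})" if "b \<le> t" for t
    unfolding Q_def using below that by (intro sum_capped_floor_eq_card_below[OF J _ gen]) force
  have "0 \<le> (\<Sum>p\<in>J. capped_floor m (b - y p))"
    using below by (intro sum_nonneg capped_floor_nonneg) simp
  with s(1) have "0 \<le> s"
    by linarith
  have "card {q\<in>Q. q \<le> b} \<le> nat s" "nat s \<le> card Q"
    using count[of b] s \<open>card Q = card J * m\<close> \<open>0 \<le> s\<close> by (simp_all add: nat_le_iff mult.commute)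
  then obtain lo hi where lohi: "b \<le> lo" "lo < hi" and level: "\<And>t. t \<in> {lo<..<hi} \<Longrightarrow> card {q\<in>Q. q \<le> t} = nat s"
    using card_below_constant_on_interval[of Q b "nat s"] J by (auto simp: Q_def)
  obtain t where t: "t \<in> {lo<..<hi}" "\<forall>p\<in>J. t - y p \<notin> \<int>"
    using exists_generic_in_interval[OF J \<open>lo < hi\<close>] by blast
  moreover have "(\<Sum>p\<in>J. capped_floor m (t - y p)) = s"
    using count[of t] level[OF t(1)] t(1) lohi \<open>0 \<le> s\<close> by simp
  ultimately show ?thesis
    using lohi by force
qed

lemma partition_part_bounds:
  assumes "lam \<in> partitions m n" "1 \<le> i" "i \<le> n"
  shows "lam (i + 1) \<le> lam i" "lam i \<le> int m * int (n - i + 1)"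
proof -
  have outside: "lam (n + 1) = 0" and bounds: "0 \<le> lam i" "lam i \<le> int (m * (n - i + 1))"
    and decr: "i < n \<Longrightarrow> lam (i + 1) \<le> lam i"
    using assms by (auto simp: partitions_def)
  show "lam (i + 1) \<le> lam i"
    using decr outside bounds assms(3) by (cases "i < n") auto
  show "lam i \<le> int m * int (n - i + 1)"
    using bounds by (simp only: of_nat_mult)
qed

text \<open>A generic point whose tableau rows \<open>k = i, \<dots>, n\<close> have the prescribed sums \<open>\<lambda>\<^sub>k\<close>;
  such points are built one coordinate at a time, from the last one backwards.\<close>
definition realizes_from :: "nat \<Rightarrow> nat \<Rightarrow> (nat \<Rightarrow> int) \<Rightarrow> nat \<Rightarrow> (nat \<Rightarrow> real) \<Rightarrow> bool" where
  "realizes_from m n lam i x \<longleftrightarrow>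
     (\<forall>p\<in>{i..n+1}. \<forall>q\<in>{i..n+1}. p \<le> q \<longrightarrow> x q \<le> x p) \<and> generic_on {i..n+1} x \<and>
     (\<forall>k\<in>{i..n}. (\<Sum>p\<in>{k+1..n+1}. capped_floor m (x k - x p)) = lam k)"

lemma realizes_from_next_row:
  assumes lam: "lam \<in> partitions m n" and "i \<le> n" and x: "realizes_from m n lam (i + 1) x"
  shows "(\<Sum>p\<in>{i+1..n+1}. capped_floor m (x (i + 1) - x p)) = lam (i + 1)"
proof -
  have "{i+1..n+1} = insert (i + 1) {i+2..n+1}"
    using \<open>i \<le> n\<close> by auto
  then have "(\<Sum>p\<in>{i+1..n+1}. capped_floor m (x (i + 1) - x p))
      = (\<Sum>p\<in>{i+2..n+1}. capped_floor m (x (i + 1) - x p))"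
    by (simp add: capped_floor_def)
  also have "\<dots> = lam (i + 1)"
  proof (cases "i < n")
    case True
    then show ?thesis
      using x by (simp add: realizes_from_def numeral_2_eq_2)
  next
    case False
    then show ?thesis
      using lam \<open>i \<le> n\<close> by (simp add: partitions_def)
  qed
  finally show ?thesis .
qed

lemma realizes_from_update:
  assumes x: "realizes_from m n lam (i + 1) x" and "x (i + 1) < t"
    and t_gen: "\<forall>p\<in>{i+1..n+1}. t - x p \<notin> \<int>"
    and t_sum: "(\<Sum>p\<in>{i+1..n+1}. capped_floor m (t - x p)) = lam i"
  shows "realizes_from m n lam i (x(i := t))"
proof -
  let ?x = "x(i := t)"
  have mono: "\<And>p q. p \<in> {i+1..n+1} \<Longrightarrow> q \<in> {i+1..n+1} \<Longrightarrow> p \<le> q \<Longrightarrow> x q \<le> x p"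
    and gen: "generic_on {i+1..n+1} x"
    and sums: "\<And>k. k \<in> {i+1..n} \<Longrightarrow> (\<Sum>p\<in>{k+1..n+1}. capped_floor m (x k - x p)) = lam k"
    using x by (simp_all add: realizes_from_def)
  have "?x q \<le> ?x p" if "p \<in> {i..n+1}" "q \<in> {i..n+1}" "p \<le> q" for p q
    using that mono[of "i + 1" q] mono[of p q] \<open>x (i + 1) < t\<close>
    by (cases "p = i"; cases "q = i") auto
  moreover have "?x p - ?x q \<notin> \<int>" if pq: "p \<in> {i..n+1}" "q \<in> {i..n+1}" "p \<noteq> q" for p q
  proof -
    consider "p = i" "q \<in> {i+1..n+1}" | "q = i" "p \<in> {i+1..n+1}" | "p \<in> {i+1..n+1}" "q \<in> {i+1..n+1}"
      using pq by force
    then show ?thesis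
    proof cases
      case 2
      then have "- (?x p - ?x q) \<notin> \<int>"
        using t_gen by simp
      then show ?thesis
        using Ints_minus by blast
    qed (use t_gen gen pq in \<open>auto simp: generic_on_def\<close>)
  qed
  moreover have "(\<Sum>p\<in>{k+1..n+1}. capped_floor m (?x k - ?x p)) = lam k" if "k \<in> {i..n}" for k
    using t_sum sums[of k] that by (cases "k = i") auto
  ultimately show ?thesis
    by (simp add: realizes_from_def generic_on_def)
qed

lemma realizes_from_extend:
  assumes lam: "lam \<in> partitions m n" and i: "1 \<le> i" "i \<le> n"
    and x: "realizes_from m n lam (i + 1) x"
  shows "\<exists>x'. realizes_from m n lam i x'"
proof -
  have "x p \<le> x (i + 1)" if "p \<in> {i+1..n+1}" for p
    using x that by (simp add: realizes_from_def)
  moreover have "generic_on {i+1..n+1} x"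
    using x by (simp add: realizes_from_def)
  moreover have "(\<Sum>p\<in>{i+1..n+1}. capped_floor m (x (i + 1) - x p)) \<le> lam i"
    using realizes_from_next_row[OF lam i(2) x] partition_part_bounds[OF lam i] by simp
  moreover have "lam i \<le> int m * int (card {i+1..n+1})"
    using partition_part_bounds[OF lam i] i by (simp add: Suc_diff_le)
  ultimately obtain t where "x (i + 1) < t" "\<forall>p\<in>{i+1..n+1}. t - x p \<notin> \<int>"
      "(\<Sum>p\<in>{i+1..n+1}. capped_floor m (t - x p)) = lam i"
    using exists_generic_level[of "{i+1..n+1}" x "x (i + 1)" m "lam i"] by auto
  then show ?thesis
    using realizes_from_update[OF x] by blast
qed

lemma exists_realization:
  assumes "lam \<in> partitions m n"
  shows "\<exists>x. realizes_from m n lam 1 x"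
proof -
  have "\<exists>x. realizes_from m n lam (n + 1 - d) x" if "d \<le> n" for d
    using that
  proof (induction d)
    case 0
    show ?case
      by (rule exI[of _ "\<lambda>_. 0"]) (simp add: realizes_from_def generic_on_def)
  next
    case (Suc d)
    then obtain x where "realizes_from m n lam (n - d + 1) x"
      by (auto simp: Suc_diff_le)
    then show ?case
      using realizes_from_extend[OF assms, of "n - d"] Suc.prems by simp
  qed
  from this[of n] show ?thesis
    by simp
qed

lemma exists_VA_translate: "\<exists>c. (\<lambda>p. if p \<in> {1..n+1} then x p - c else 0) \<in> VA n"
proof
  let ?c = "(\<Sum>p=1..n+1. x p) / real (n + 1)"
  have "(\<Sum>p=1..n+1. (if p \<in> {1..n+1} then x p - ?c else 0)) = (\<Sum>p=1..n+1. x p) - real (n + 1) * ?c"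
    by (simp add: sum_subtractf)
  then show "(\<lambda>p. if p \<in> {1..n+1} then x p - ?c else 0) \<in> VA n"
    by (simp add: VA_def)
qed

lemma generic_point_in_complement:
  assumes "x \<in> VA n" and "\<And>i j. 1 \<le> i \<Longrightarrow> i \<le> j \<Longrightarrow> j \<le> n \<Longrightarrow> pair_alpha x i j \<notin> \<int>"
  shows "x \<in> complement_arr m n"
proof -
  have "x \<notin> hyperplane_A n i j k" if "1 \<le> i" "i \<le> j" "j \<le> n" for i j k
    using assms(2)[OF that] by (auto simp: hyperplane_A_def)
  then show ?thesis
    using assms(1) by (auto simp: complement_arr_def cat_arr_def)
qed

lemma partition_point:
  assumes lam: "lam \<in> partitions m n"
  shows "\<exists>x \<in> complement_arr m n \<inter> dominant_cone n. point_partition m n x = lam"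
proof -
  obtain y where y: "realizes_from m n lam 1 y"
    using exists_realization[OF lam] by blast
  obtain c where "(\<lambda>p. if p \<in> {1..n+1} then y p - c else 0) \<in> VA n"
    using exists_VA_translate by blast
  then obtain x where VA: "x \<in> VA n" and x: "\<And>p. p \<in> {1..n+1} \<Longrightarrow> x p = y p - c"
    by fastforce
  have alpha: "pair_alpha x i j = y i - y (j + 1)" if "1 \<le> i" "i \<le> j" "j \<le> n" for i j
    using that by (simp add: pair_alpha_def x)
  have "x \<in> dominant_cone n"
    unfolding dominant_cone_def
  proof (intro CollectI allI impI)
    fix i j assume "1 \<le> i \<and> i \<le> j \<and> j \<le> n"
    then show "0 \<le> pair_alpha x i j"
      using y alpha[of i j] by (simp add: realizes_from_def)
  qed
  moreover have "x \<in> complement_arr m n"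
    using VA y alpha by (intro generic_point_in_complement) (auto simp: realizes_from_def generic_on_def)
  moreover have "point_partition m n x i = lam i" for i
  proof (cases "i \<in> {1..n}")
    case True
    have "(\<Sum>j=i..n. point_tableau m n x i j) = (\<Sum>j=i..n. capped_floor m (y i - y (Suc j)))"
      using True by (intro sum.cong) (auto simp: point_tableau_def alpha)
    also have "\<dots> = (\<Sum>p\<in>{i+1..n+1}. capped_floor m (y i - y p))"
      using sum.shift_bounds_cl_Suc_ivl[of "\<lambda>p. capped_floor m (y i - y p)" i n] by simp
    finally show ?thesis
      using y True by (simp add: point_partition_def realizes_from_def)
  next
    case False
    then show ?thesis
      using lam unfolding point_partition_def partitions_def by auto
  qed
  ultimately show ?thesis
    by blast
qed

lemma tableau_of_point:
  assumes "x \<in> complement_arr m n \<inter> dominant_cone n"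
  shows "phi_bar m n (point_partition m n x) = shi_tableau m n (connected_component_set (complement_arr m n) x)"
proof (intro ext)
  fix i j
  show "phi_bar m n (point_partition m n x) i j = shi_tableau m n (connected_component_set (complement_arr m n) x) i j"
    using assms shi_k_component[of x m n i j]
    by (auto simp: phi_bar_def phik_point_partition shi_tableau_def point_tableau_def dominant_cone_def)
qed

lemma dominant_regions_eq_components:
  "dominant_regions m n
    = (\<lambda>x. connected_component_set (complement_arr m n) x) ` (complement_arr m n \<inter> dominant_cone n)"
proof (intro equalityI subsetI)
  fix R assume R: "R \<in> dominant_regions m n"
  then obtain x where x: "x \<in> complement_arr m n" and "R = connected_component_set (complement_arr m n) x"
    by (auto simp: dominant_regions_def regions_def)
  moreover have "x \<in> dominant_cone n"
    using R x \<open>R = _\<close> connected_component_refl by (auto simp: dominant_regions_def)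
  ultimately show "R \<in> (\<lambda>x. connected_component_set (complement_arr m n) x) ` (complement_arr m n \<inter> dominant_cone n)"
    by blast
next
  fix R assume "R \<in> (\<lambda>x. connected_component_set (complement_arr m n) x) ` (complement_arr m n \<inter> dominant_cone n)"
  then obtain x where x: "x \<in> complement_arr m n" "x \<in> dominant_cone n"
    and R: "R = connected_component_set (complement_arr m n) x"
    by blast
  have "y \<in> dominant_cone n" if "y \<in> R" for y
    using x component_capped_floor[OF x(1) that[unfolded R]] by (simp add: dominant_cone_def)
  then show "R \<in> dominant_regions m n"
    using x R by (auto simp: dominant_regions_def regions_def)
qed

lemma partitions_eq_point_partitions:
  "partitions m n = point_partition m n ` (complement_arr m n \<inter> dominant_cone n)"
  using partition_point point_partition_in_partitions by blast

theorem lemma4p7: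
  fixes n m :: nat
  assumes "1 \<le> n" and "1 \<le> m"
  shows "phi_bar m n ` partitions m n = shi_tableau m n ` dominant_regions m n"
proof -
  let ?P = "complement_arr m n \<inter> dominant_cone n"
  have "phi_bar m n ` partitions m n = (\<lambda>x. phi_bar m n (point_partition m n x)) ` ?P"
    by (simp add: partitions_eq_point_partitions image_image)
  also have "\<dots> = (\<lambda>x. shi_tableau m n (connected_component_set (complement_arr m n) x)) ` ?P"
    using tableau_of_point by (rule image_cong[OF refl])
  also have "\<dots> = shi_tableau m n ` dominant_regions m n"
    by (simp add: dominant_regions_eq_components image_image)
  finally show ?thesis .
qed

end
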